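(* Let $G=(V,E)$ be a bispanning graph, $G'=(V',E')\subseteq G$ a subgraph which is itself bispanning, and $\overline{G}=(\overline V,\overline E)=G/G'$. (i) If $E=S\,\dot\cup\,T$ with $S,T$ disjoint spanning trees of $G$, then $S\cap E'$ and $T\cap E'$ are disjoint spanning trees of $G'$, and $S\cap\overline E$ and $T\cap\overline E$ are disjoint spanning trees of $\overline G$. (ii) If $S',T'$ are two disjoint spanning trees of $G'$ and $\overline S,\overline T$ are two disjoint spanning trees of $\overline G$, then $S'\,\dot\cup\,\overline S$ and $T'\,\dot\cup\,\overline T$ are two disjoint spanning trees of $G$.
   Context: Graphs are finite, undirected, may have parallel edges, no loops. A spanning tree of $H$ is an edge set $T$ such that $(V(H),T)$ is connected and acyclic; $H$ is bispanning if its edge set is the union of two disjoint spanning trees. The contraction $G/G'$ replaces all vertices of $V'$ by one new vertex, deletes all edges with both ends in $V'$, and makes every other edge with an end in $V'$ incident to the new vertex; its edges are identified with the corresponding edges of $G$. *)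

theory Defs
  imports Main
begin

text \<open>Parallel edges are allowed (different edges may have the same ends).\<close>

definition mgraph :: "'v set \<Rightarrow> 'e set \<Rightarrow> ('e \<Rightarrow> 'v \<times> 'v) \<Rightarrow> bool" where
  "mgraph V E ends \<longleftrightarrow> finite V \<and> finite E \<and>
     (\<forall>e\<in>E. fst (ends e) \<in> V \<and> snd (ends e) \<in> V \<and> fst (ends e) \<noteq> snd (ends e))"

definition joins :: "('e \<Rightarrow> 'v \<times> 'v) \<Rightarrow> 'e \<Rightarrow> 'v \<Rightarrow> 'v \<Rightarrow> bool" where
  "joins ends e u v \<longleftrightarrow> ends e = (u, v) \<or> ends e = (v, u)"

inductive reach :: "('e \<Rightarrow> 'v \<times> 'v) \<Rightarrow> 'e set \<Rightarrow> 'v \<Rightarrow> 'v \<Rightarrow> bool"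
  for ends F where
  reach_refl: "reach ends F u u"
| reach_step: "reach ends F u v \<Longrightarrow> e \<in> F \<Longrightarrow> joins ends e v w \<Longrightarrow> reach ends F u w"

text \<open>A cycle in F: distinct vertices v_0..v_(k-1), distinct edges e_0..e_(k-1) of F,
  e_i joining v_i and v_(i+1 mod k). Two parallel edges form a cycle (k = 2).\<close>
definition has_cycle :: "('e \<Rightarrow> 'v \<times> 'v) \<Rightarrow> 'e set \<Rightarrow> bool" where
  "has_cycle ends F \<longleftrightarrow> (\<exists>vs es. length vs = length es \<and> length es \<ge> 1 \<and>
      distinct vs \<and> distinct es \<and> set es \<subseteq> F \<and>
      (\<forall>i < length es. joins ends (es ! i) (vs ! i) (vs ! ((i + 1) mod length es))))"

definition spanning_tree :: "'v set \<Rightarrow> 'e set \<Rightarrow> ('e \<Rightarrow> 'v \<times> 'v) \<Rightarrow> 'e set \<Rightarrow> bool" where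
  "spanning_tree V E ends T \<longleftrightarrow> T \<subseteq> E \<and> (\<forall>u\<in>V. \<forall>v\<in>V. reach ends T u v) \<and> \<not> has_cycle ends T"

definition bispanning :: "'v set \<Rightarrow> 'e set \<Rightarrow> ('e \<Rightarrow> 'v \<times> 'v) \<Rightarrow> bool" where
  "bispanning V E ends \<longleftrightarrow> (\<exists>S T. S \<inter> T = {} \<and> S \<union> T = E \<and>
      spanning_tree V E ends S \<and> spanning_tree V E ends T)"

definition subgraph :: "'v set \<Rightarrow> 'e set \<Rightarrow> 'v set \<Rightarrow> 'e set \<Rightarrow> ('e \<Rightarrow> 'v \<times> 'v) \<Rightarrow> bool" where
  "subgraph V' E' V E ends \<longleftrightarrow> V' \<subseteq> V \<and> E' \<subseteq> E \<and> mgraph V' E' ends"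

text \<open>Contraction G/G': vertices of V' are replaced by the new vertex None,
  other vertices v become Some v; edges with both ends in V' are deleted,
  the remaining edges keep their identity with ends redirected.\<close>
definition contr_map :: "'v set \<Rightarrow> 'v \<Rightarrow> 'v option" where
  "contr_map V' v = (if v \<in> V' then None else Some v)"

definition contr_V :: "'v set \<Rightarrow> 'v set \<Rightarrow> 'v option set" where
  "contr_V V V' = insert None (Some ` (V - V'))"

definition contr_E :: "'e set \<Rightarrow> 'v set \<Rightarrow> ('e \<Rightarrow> 'v \<times> 'v) \<Rightarrow> 'e set" where
  "contr_E E V' ends = {e \<in> E. \<not> (fst (ends e) \<in> V' \<and> snd (ends e) \<in> V')}"

definition contr_ends :: "'v set \<Rightarrow> ('e \<Rightarrow> 'v \<times> 'v) \<Rightarrow> 'e \<Rightarrow> 'v option \<times> 'v option" where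
  "contr_ends V' ends e = (contr_map V' (fst (ends e)), contr_map V' (snd (ends e)))"

end

theory Submission imports Defs begin

text \<open>For an edge set F with ends in a finite vertex set W, |F| plus the number of
  connected components of (W, F) is at least |W|, with equality exactly when F is acyclic.
  Hence a spanning tree of an n-vertex graph is the same as an acyclic, or equivalently a
  connecting, edge set with n - 1 edges, and both parts of the theorem reduce to counting.
  (i) S \<inter> E' and T \<inter> E' are acyclic, so each has at most |V'| - 1 edges; they partition E',
  which has 2|V'| - 2 edges, so both are spanning trees of G'. Contraction keeps S connected
  and removes at least its |V'| - 1 edges inside G', matching the loss of |V'| - 1 vertices.
  (ii) S' \<union> Sb connects G, because Sb connects the contracted graph and S' connects V',
  and it has (|V'| - 1) + (|V| - |V'|) = |V| - 1 edges.\<close>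

lemma joins_sym: "joins ends e u v \<Longrightarrow> joins ends e v u"
  by (auto simp: joins_def)

lemma reach_edge: "e \<in> F \<Longrightarrow> joins ends e u v \<Longrightarrow> reach ends F u v"
  by (meson reach.intros)

lemma reach_trans: "reach ends F u v \<Longrightarrow> reach ends F v w \<Longrightarrow> reach ends F u w"
  by (rotate_tac, induction rule: reach.induct) (auto intro: reach.intros)

lemma reach_sym: "reach ends F u v \<Longrightarrow> reach ends F v u"
  by (induction rule: reach.induct) (auto intro: reach.intros reach_trans reach_edge joins_sym)

lemma reach_mono: "reach ends F u v \<Longrightarrow> F \<subseteq> G \<Longrightarrow> reach ends G u v"
  by (induction rule: reach.induct) (auto intro: reach.intros)

lemma reach_empty: "reach ends {} u v \<Longrightarrow> u = v"
  by (induction rule: reach.induct) auto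

lemma has_cycle_mono: "has_cycle ends F \<Longrightarrow> F \<subseteq> G \<Longrightarrow> has_cycle ends G"
  unfolding has_cycle_def by blast

lemma mgraph_subset: "mgraph W E ends \<Longrightarrow> F \<subseteq> E \<Longrightarrow> mgraph W F ends"
  unfolding mgraph_def using finite_subset by blast

lemma mgraph_joins: "mgraph W E ends \<Longrightarrow> e \<in> E \<Longrightarrow> \<exists>a b. joins ends e a b \<and> a \<in> W \<and> b \<in> W"
  unfolding mgraph_def joins_def by (metis prod.collapse)

definition walk :: "('e \<Rightarrow> 'v \<times> 'v) \<Rightarrow> 'e set \<Rightarrow> 'v list \<Rightarrow> 'e list \<Rightarrow> bool" where
  "walk ends F vs es \<longleftrightarrow> length vs = Suc (length es) \<and> set es \<subseteq> F \<and>
     (\<forall>i<length es. joins ends (es!i) (vs!i) (vs!Suc i))"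

lemma reach_imp_distinct_walk:
  "reach ends F u v \<Longrightarrow> \<exists>vs es. walk ends F vs es \<and> hd vs = u \<and> last vs = v \<and> distinct vs"
proof (induction rule: reach.induct)
  case (reach_refl u)
  show ?case by (rule exI[of _ "[u]"], rule exI[of _ "[]"]) (simp add: walk_def)
next
  case (reach_step u v e w)
  then obtain vs es where p: "walk ends F vs es" "hd vs = u" "last vs = v" "distinct vs" by blast
  have ne: "vs \<noteq> []" using p(1) by (auto simp: walk_def)
  show ?case
  proof (cases "w \<in> set vs")
    case True
    then obtain j where j: "j < length vs" "vs ! j = w" by (metis in_set_conv_nth)
    have "walk ends F (take (Suc j) vs) (take j es)"
      using p(1) j unfolding walk_def by (auto simp: min_def dest: in_set_takeD)
    moreover have "hd (take (Suc j) vs) = u" using p(2) ne by simp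
    moreover have "last (take (Suc j) vs) = w" using j by (simp add: take_Suc_conv_app_nth)
    ultimately show ?thesis using p(4) distinct_take by blast
  next
    case False
    have "walk ends F (vs @ [w]) (es @ [e])"
      using p(1,3) ne reach_step.hyps unfolding walk_def
      by (auto simp: nth_append last_conv_nth less_Suc_eq)
    then show ?thesis using p(2,4) ne False by auto
  qed
qed

lemma walk_distinct_edges:
  assumes "walk ends F vs es" "distinct vs" shows "distinct es"
  unfolding distinct_conv_nth
proof (intro allI impI notI)
  fix i j assume ij: "i < length es" "j < length es" "i \<noteq> j" and eq: "es ! i = es ! j"
  have L: "length vs = Suc (length es)"
    and "joins ends (es!i) (vs!i) (vs!Suc i)" "joins ends (es!i) (vs!j) (vs!Suc j)"
    using assms(1) ij eq by (auto simp: walk_def)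
  then have "(vs!i = vs!j \<and> vs!Suc i = vs!Suc j) \<or> (vs!i = vs!Suc j \<and> vs!Suc i = vs!j)"
    by (auto simp: joins_def)
  then show False
    using assms(2) ij L by (auto simp: nth_eq_iff_index_eq)
qed

lemma has_cycle_insert_if_reach:
  assumes "reach ends F b a" "joins ends e a b" "e \<notin> F"
  shows "has_cycle ends (insert e F)"
proof -
  obtain vs es where p: "walk ends F vs es" "hd vs = b" "last vs = a" "distinct vs"
    using reach_imp_distinct_walk[OF assms(1)] by blast
  have L: "length vs = Suc (length es)" and S: "set es \<subseteq> F"
    and J: "\<forall>i<length es. joins ends (es!i) (vs!i) (vs!Suc i)"
    using p(1) by (auto simp: walk_def)
  have "distinct es" using walk_distinct_edges p by blast
  have ne: "vs \<noteq> []" using L by auto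
  show ?thesis unfolding has_cycle_def
  proof (rule exI[of _ vs], rule exI[of _ "es @ [e]"], intro conjI allI impI)
    fix i assume i: "i < length (es @ [e])"
    show "joins ends ((es @ [e]) ! i) (vs ! i) (vs ! ((i + 1) mod length (es @ [e])))"
    proof (cases "i < length es")
      case True then show ?thesis using J by (simp add: nth_append)
    next
      case False
      then have "i = length es" using i by simp
      then show ?thesis using assms(2) p(2,3) L ne
        by (simp add: nth_append last_conv_nth hd_conv_nth joins_sym)
    qed
  qed (use L p S \<open>distinct es\<close> assms(3) in auto)
qed

lemma has_cycle_imp_reach_without_edge:
  assumes "has_cycle ends F"
  shows "\<exists>e\<in>F. \<exists>a b. joins ends e a b \<and> reach ends (F - {e}) a b"
proof -
  obtain vs es where c: "length vs = length es" "length es \<ge> 1" "distinct es" "set es \<subseteq> F"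
    "\<forall>i < length es. joins ends (es ! i) (vs ! i) (vs ! ((i + 1) mod length es))"
    using assms unfolding has_cycle_def by blast
  define n where "n = length es"
  have e0: "es!0 \<in> F" and j0: "joins ends (es!0) (vs!0) (vs!(1 mod n))"
    using c n_def by (auto simp: Suc_le_eq)
  show ?thesis
  proof (cases "n = 1")
    case True
    then show ?thesis using e0 j0 by (auto intro: reach.intros)
  next
    case False
    then have n2: "n \<ge> 2" using c n_def by auto
    \<comment> \<open>the rest of the cycle leads from vs!1 back to vs!0\<close>
    have R: "reach ends (F - {es!0}) (vs!1) (vs!(j mod n))" if "1 \<le> j" "j \<le> n" for j
      using that
    proof (induction j rule: dec_induct)
      case base then show ?case using n2 by (simp add: reach.intros)
    next
      case (step j)
      have "j < n" using step by simp
      have "es!j \<noteq> es!0"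
        using c(3) \<open>j < n\<close> step.hyps(1) n_def nth_eq_iff_index_eq by fastforce
      moreover have "es!j \<in> F" "joins ends (es!j) (vs!j) (vs!((j+1) mod n))"
        using c \<open>j < n\<close> n_def by auto
      ultimately show ?case using step by (auto intro: reach.intros)
    qed
    have "reach ends (F - {es!0}) (vs!0) (vs!1)"
      using R[of n] n2 by (auto intro: reach_sym)
    then show ?thesis using e0 j0 n2 by auto
  qed
qed

subsection \<open>Counting connected components\<close>

definition conn_rel :: "('e \<Rightarrow> 'v \<times> 'v) \<Rightarrow> 'v set \<Rightarrow> 'e set \<Rightarrow> ('v \<times> 'v) set" where
  "conn_rel ends W F = {(u,v). u \<in> W \<and> v \<in> W \<and> reach ends F u v}"

definition num_components :: "('e \<Rightarrow> 'v \<times> 'v) \<Rightarrow> 'v set \<Rightarrow> 'e set \<Rightarrow> nat" where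
  "num_components ends W F = card (W // conn_rel ends W F)"

lemma equiv_conn_rel: "equiv W (conn_rel ends W F)"
  unfolding conn_rel_def
  by (rule equivI) (auto simp: refl_on_def sym_def trans_def intro: reach.intros reach_sym reach_trans)

lemma conn_rel_Image:
  "conn_rel ends W F `` {u} = (if u \<in> W then {v \<in> W. reach ends F u v} else {})"
  by (auto simp: conn_rel_def)

lemma quotient_eq_image: "W // R = (\<lambda>u. R``{u}) ` W"
  by (auto simp: quotient_def)

lemma finite_components: "finite W \<Longrightarrow> finite (W // conn_rel ends W F)"
  by (metis equiv_conn_rel equiv_type finite_quotient)

lemma reach_insert_iff:
  assumes "joins ends e a b"
  shows "reach ends (insert e F) u v \<longleftrightarrow>
     reach ends F u v \<or> (reach ends F u a \<and> reach ends F b v) \<or> (reach ends F u b \<and> reach ends F a v)"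
proof
  assume "reach ends (insert e F) u v"
  then show "reach ends F u v \<or> (reach ends F u a \<and> reach ends F b v) \<or> (reach ends F u b \<and> reach ends F a v)"
  proof (induction rule: reach.induct)
    case (reach_refl u) then show ?case by (simp add: reach.intros)
  next
    case (reach_step u v g w)
    show ?case
    proof (cases "g \<in> F")
      case True
      then have "reach ends F v w" using reach_step by (simp add: reach_edge)
      then show ?thesis using reach_step.IH by (meson reach_trans)
    next
      case False
      then have "(v = a \<and> w = b) \<or> (v = b \<and> w = a)"
        using reach_step.hyps assms by (auto simp: joins_def)
      then show ?thesis using reach_step.IH by (metis reach.intros(1) reach_sym reach_trans)
    qed
  qed
next
  have "reach ends (insert e F) a b" "reach ends (insert e F) b a"
    using assms by (auto intro: reach_edge joins_sym)
  moreover have "reach ends F x y \<Longrightarrow> reach ends (insert e F) x y" for x y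
    by (erule reach_mono) auto
  ultimately show "reach ends F u v \<or> (reach ends F u a \<and> reach ends F b v) \<or> (reach ends F u b \<and> reach ends F a v)
    \<Longrightarrow> reach ends (insert e F) u v"
    by (meson reach_trans)
qed

lemma conn_rel_insert_if_reach:
  assumes "joins ends e a b" "reach ends F a b"
  shows "conn_rel ends W (insert e F) = conn_rel ends W F"
proof -
  have "reach ends (insert e F) u v \<longleftrightarrow> reach ends F u v" for u v
    using reach_insert_iff[OF assms(1)] assms(2) by (metis reach_sym reach_trans)
  then show ?thesis unfolding conn_rel_def by simp
qed

lemma conn_rel_insert_Image:
  fixes F :: "'e set"
  assumes "joins ends e a b" "u \<in> W" "a \<in> W" "b \<in> W"
  defines "R \<equiv> conn_rel ends W F"
  shows "conn_rel ends W (insert e F) `` {u} =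
    (if u \<in> R``{a} \<union> R``{b} then R``{a} \<union> R``{b} else R``{u})"
proof (cases "u \<in> R``{a} \<union> R``{b}")
  case True
  then have "reach ends F u a \<or> reach ends F u b"
    using assms(3,4) by (auto simp: R_def conn_rel_Image intro: reach_sym)
  then have "reach ends (insert e F) u v \<longleftrightarrow> reach ends F a v \<or> reach ends F b v" for v
    unfolding reach_insert_iff[OF assms(1)] by (metis reach_sym reach_trans)
  then show ?thesis using True assms(2-4) by (auto simp: R_def conn_rel_Image)
next
  case False
  then have "\<not> reach ends F u a" "\<not> reach ends F u b"
    using assms(2-4) by (auto simp: R_def conn_rel_Image reach_sym)
  then show ?thesis using False assms(2)
    by (auto simp: R_def conn_rel_Image reach_insert_iff[OF assms(1)])
qed

lemma quotient_conn_rel_insert: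
  fixes F :: "'e set"
  assumes "joins ends e a b" "a \<in> W" "b \<in> W"
  defines "R \<equiv> conn_rel ends W F"
  shows "W // conn_rel ends W (insert e F) = insert (R``{a} \<union> R``{b}) (W // R - {R``{a}, R``{b}})"
    (is "_ = insert (?A \<union> ?B) (_ - {?A, ?B})")
proof -
  have cl: "conn_rel ends W (insert e F) `` {u} = (if u \<in> ?A \<union> ?B then ?A \<union> ?B else R``{u})"
    if "u \<in> W" for u
    using conn_rel_insert_Image[OF assms(1) that assms(2,3)] by (simp add: R_def)
  have eq: "equiv W R" unfolding R_def by (rule equiv_conn_rel)
  have "a \<in> ?A" by (rule equiv_class_self[OF eq assms(2)])
  have class_of: "R``{u} = R``{c}" if "u \<in> R``{c}" for u c
    using that eq by (metis Image_singleton_iff equiv_class_eq)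
  have "?A \<union> ?B = conn_rel ends W (insert e F) `` {a}"
    using cl[OF assms(2)] \<open>a \<in> ?A\<close> by simp
  then have "?A \<union> ?B \<in> W // conn_rel ends W (insert e F)"
    using assms(2) by (simp add: quotientI)
  moreover have "C \<in> W // conn_rel ends W (insert e F)"
    if C: "C \<in> W // R" "C \<noteq> ?A" "C \<noteq> ?B" for C
  proof -
    obtain u where u: "u \<in> W" "C = R``{u}" using C(1) by (auto simp: quotient_eq_image)
    then have "u \<notin> ?A \<union> ?B" using C(2,3) class_of by blast
    then have "C = conn_rel ends W (insert e F) `` {u}" using cl[OF u(1)] u(2) by simp
    then show ?thesis using u(1) by (simp add: quotientI)
  qed
  moreover have "C \<in> insert (?A \<union> ?B) (W // R - {?A, ?B})"
    if C: "C \<in> W // conn_rel ends W (insert e F)" for C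
  proof -
    obtain u where u: "u \<in> W" "C = conn_rel ends W (insert e F) `` {u}"
      using C by (auto simp: quotient_eq_image)
    have "u \<in> R``{u}" by (rule equiv_class_self[OF eq u(1)])
    then show ?thesis using cl[OF u(1)] u by (auto simp: quotient_eq_image)
  qed
  ultimately show ?thesis by blast
qed

lemma num_components_insert_bridge:
  assumes "joins ends e a b" "\<not> reach ends F a b" "a \<in> W" "b \<in> W" "finite W"
  shows "num_components ends W F = Suc (num_components ends W (insert e F))"
proof -
  define R where "R = conn_rel ends W F"
  define A where "A = R``{a}"
  define B where "B = R``{b}"
  have eq: "equiv W R" unfolding R_def by (rule equiv_conn_rel)
  have AB: "A \<in> W // R" "B \<in> W // R" using assms(3,4) by (auto simp: A_def B_def quotientI)
  have "a \<in> A" "b \<in> B"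
    unfolding A_def B_def using equiv_class_self[OF eq assms(3)] equiv_class_self[OF eq assms(4)] .
  have "b \<notin> A" using assms(2) by (auto simp: A_def R_def conn_rel_def)
  then have "A \<noteq> B" using \<open>b \<in> B\<close> by blast
  \<comment> \<open>distinct classes are disjoint, so the merged class is none of the others\<close>
  have "A \<union> B \<notin> W // R - {A, B}"
    using quotient_disj[OF eq] AB(1) \<open>a \<in> A\<close> \<open>b \<in> B\<close> \<open>b \<notin> A\<close> by blast
  moreover have "finite (W // R)" using assms(5) by (simp add: R_def finite_components)
  moreover have "card {A, B} \<le> card (W // R)" using AB calculation(2) by (intro card_mono) auto
  ultimately show ?thesis
    using quotient_conn_rel_insert[OF assms(1,3,4), of F] AB \<open>A \<noteq> B\<close>
    by (simp add: num_components_def R_def A_def B_def card_Diff_subset)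
qed

lemma num_components_empty: "num_components ends W {} = card W"
proof -
  have "W // conn_rel ends W {} = (\<lambda>u. {u}) ` W"
    unfolding quotient_eq_image
    by (rule image_cong) (auto simp: conn_rel_Image dest: reach_empty intro: reach.intros)
  then show ?thesis unfolding num_components_def by (simp add: card_image)
qed

lemma card_le_card_plus_num_components:
  assumes "mgraph W F ends"
  shows "card W \<le> card F + num_components ends W F"
proof -
  have "finite F" using assms by (simp add: mgraph_def)
  then show ?thesis using assms
  proof (induction F rule: finite_induct)
    case empty then show ?case by (simp add: num_components_empty)
  next
    case (insert e F)
    obtain a b where ab: "joins ends e a b" "a \<in> W" "b \<in> W"
      using mgraph_joins[OF insert.prems insertI1] by blast
    have IH: "card W \<le> card F + num_components ends W F"
      using insert.IH mgraph_subset[OF insert.prems subset_insertI] .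
    show ?case
    proof (cases "reach ends F a b")
      case True
      then show ?thesis
        using conn_rel_insert_if_reach[OF ab(1) True, of W] IH insert.hyps
        by (simp add: num_components_def)
    next
      case False
      have "finite W" using insert.prems by (simp add: mgraph_def)
      then show ?thesis
        using num_components_insert_bridge[OF ab(1) False ab(2,3)] IH insert.hyps by simp
    qed
  qed
qed

lemma card_plus_num_components_acyclic:
  assumes "mgraph W F ends" "\<not> has_cycle ends F"
  shows "card F + num_components ends W F = card W"
proof -
  have "finite F" using assms by (simp add: mgraph_def)
  then show ?thesis using assms
  proof (induction F rule: finite_induct)
    case empty then show ?case by (simp add: num_components_empty)
  next
    case (insert e F)
    obtain a b where ab: "joins ends e a b" "a \<in> W" "b \<in> W"
      using mgraph_joins[OF insert.prems(1) insertI1] by blast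
    have "\<not> has_cycle ends F" using insert.prems(2) has_cycle_mono by blast
    then have IH: "card F + num_components ends W F = card W"
      using insert.IH mgraph_subset[OF insert.prems(1) subset_insertI] by blast
    have "\<not> reach ends F a b"
      using has_cycle_insert_if_reach[OF reach_sym ab(1) insert.hyps(2)] insert.prems(2) by blast
    moreover have "finite W" using insert.prems by (simp add: mgraph_def)
    ultimately show ?case
      using num_components_insert_bridge[OF ab(1) _ ab(2,3)] IH insert.hyps by simp
  qed
qed

lemma card_less_card_plus_num_components_if_cycle:
  assumes "mgraph W F ends" "has_cycle ends F"
  shows "card W < card F + num_components ends W F"
proof -
  obtain e a b where e: "e \<in> F" "joins ends e a b" "reach ends (F - {e}) a b"
    using has_cycle_imp_reach_without_edge[OF assms(2)] by blast
  have "card W \<le> card (F - {e}) + num_components ends W (F - {e})"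
    using card_le_card_plus_num_components mgraph_subset[OF assms(1) Diff_subset] .
  moreover have "num_components ends W F = num_components ends W (F - {e})"
    using conn_rel_insert_if_reach[OF e(2,3), of W] e(1)
    unfolding num_components_def by (simp add: insert_absorb)
  moreover have "finite F" using assms(1) by (simp add: mgraph_def)
  ultimately show ?thesis using card_Suc_Diff1[OF _ e(1)] by simp
qed

lemma num_components_eq_1_iff:
  assumes "W \<noteq> {}"
  shows "num_components ends W F = 1 \<longleftrightarrow> (\<forall>u\<in>W. \<forall>v\<in>W. reach ends F u v)"
proof
  assume "num_components ends W F = 1"
  then obtain C where C: "W // conn_rel ends W F = {C}"
    unfolding num_components_def by (auto simp: card_Suc_eq)
  show "\<forall>u\<in>W. \<forall>v\<in>W. reach ends F u v"
  proof (intro ballI)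
    fix u v assume uv: "u \<in> W" "v \<in> W"
    then have "conn_rel ends W F `` {u} \<in> {C}" "conn_rel ends W F `` {v} \<in> {C}"
      unfolding C[symmetric] by (simp_all add: quotientI)
    then have "(u, v) \<in> conn_rel ends W F"
      using eq_equiv_class_iff[OF equiv_conn_rel[of W ends F] uv] by simp
    then show "reach ends F u v" by (simp add: conn_rel_def)
  qed
next
  assume "\<forall>u\<in>W. \<forall>v\<in>W. reach ends F u v"
  then have "W // conn_rel ends W F = {W}"
    using assms by (auto simp: quotient_eq_image conn_rel_Image)
  then show "num_components ends W F = 1" unfolding num_components_def by simp
qed

lemma num_components_pos:
  "finite W \<Longrightarrow> W \<noteq> {} \<Longrightarrow> 0 < num_components ends W F"
  unfolding num_components_def by (simp add: card_gt_0_iff finite_components)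

lemma card_acyclic_le:
  assumes "mgraph W F ends" "W \<noteq> {}" "\<not> has_cycle ends F"
  shows "card F + 1 \<le> card W"
  using card_plus_num_components_acyclic[OF assms(1,3)] num_components_pos[OF _ assms(2), of ends F]
    assms(1) by (simp add: mgraph_def)

lemma card_spanning_tree:
  assumes "mgraph W E ends" "W \<noteq> {}" "spanning_tree W E ends T"
  shows "card T + 1 = card W"
proof -
  have T: "T \<subseteq> E" "\<not> has_cycle ends T" "\<forall>u\<in>W. \<forall>v\<in>W. reach ends T u v"
    using assms(3) by (auto simp: spanning_tree_def)
  then have "card T + num_components ends W T = card W"
    using card_plus_num_components_acyclic mgraph_subset[OF assms(1)] by blast
  moreover have "num_components ends W T = 1"
    using num_components_eq_1_iff[OF assms(2)] T(3) by blast
  ultimately show ?thesis by simp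
qed

lemma spanning_tree_if_acyclic_card:
  assumes "mgraph W E ends" "W \<noteq> {}" "T \<subseteq> E" "\<not> has_cycle ends T" "card T + 1 = card W"
  shows "spanning_tree W E ends T"
proof -
  have "card T + num_components ends W T = card W"
    using card_plus_num_components_acyclic mgraph_subset[OF assms(1,3)] assms(4) by blast
  then have "num_components ends W T = 1" using assms(5) by simp
  then show ?thesis using assms(3,4) num_components_eq_1_iff[OF assms(2), of ends T]
    by (simp add: spanning_tree_def)
qed

lemma spanning_tree_if_connected_card:
  assumes "mgraph W E ends" "W \<noteq> {}" "T \<subseteq> E" "\<forall>u\<in>W. \<forall>v\<in>W. reach ends T u v"
    "card T + 1 \<le> card W"
  shows "spanning_tree W E ends T"
proof -
  have "num_components ends W T = 1"
    using num_components_eq_1_iff[OF assms(2), of ends T] assms(4) by blast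
  have "\<not> has_cycle ends T"
  proof
    assume "has_cycle ends T"
    then have "card W < card T + num_components ends W T"
      by (rule card_less_card_plus_num_components_if_cycle[OF mgraph_subset[OF assms(1,3)]])
    then show False using \<open>num_components ends W T = 1\<close> assms(5) by simp
  qed
  then show ?thesis using assms(3,4) by (simp add: spanning_tree_def)
qed

lemma card_bispanning:
  assumes "mgraph W E ends" "W \<noteq> {}" "bispanning W E ends"
  shows "card E + 2 = 2 * card W"
proof -
  obtain S T where ST: "S \<inter> T = {}" "S \<union> T = E" "spanning_tree W E ends S" "spanning_tree W E ends T"
    using assms(3) unfolding bispanning_def by blast
  moreover have "finite S" "finite T" using ST(2) assms(1) by (auto simp: mgraph_def)
  ultimately have "card E = card S + card T" using card_Un_disjoint[of S T] by simp
  then show ?thesis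
    using card_spanning_tree[OF assms(1,2) ST(3)] card_spanning_tree[OF assms(1,2) ST(4)] by simp
qed

subsection \<open>Contraction of a subgraph\<close>

lemma mgraph_contract:
  assumes "mgraph V E ends"
  shows "mgraph (contr_V V V') (contr_E E V' ends) (contr_ends V' ends)"
  using assms unfolding mgraph_def contr_V_def contr_E_def contr_ends_def contr_map_def
  by auto

lemma card_contr_V:
  assumes "finite V" "V' \<subseteq> V"
  shows "card (contr_V V V') = Suc (card V - card V')"
proof -
  have "card (Some ` (V - V')) = card V - card V'"
    using assms by (simp add: card_image card_Diff_subset finite_subset)
  then show ?thesis unfolding contr_V_def using assms by simp
qed

lemma contr_V_eq_image:
  assumes "V' \<noteq> {}" "V' \<subseteq> V"
  shows "contr_V V V' = contr_map V' ` V"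
  using assms unfolding contr_V_def contr_map_def by force

lemma contr_E_subset: "contr_E E V' ends \<subseteq> E"
  by (auto simp: contr_E_def)

lemma subgraph_disjoint_contr_E: "subgraph V' E' V E ends \<Longrightarrow> E' \<inter> contr_E E V' ends = {}"
  by (auto simp: subgraph_def mgraph_def contr_E_def)

lemma joins_contract:
  "joins ends e u v \<Longrightarrow> joins (contr_ends V' ends) e (contr_map V' u) (contr_map V' v)"
  by (auto simp: joins_def contr_ends_def)

lemma joins_contract_lift:
  assumes "joins (contr_ends V' ends) e x y"
  shows "\<exists>u v. joins ends e u v \<and> contr_map V' u = x \<and> contr_map V' v = y"
proof -
  obtain p q where "ends e = (p, q)" by fastforce
  then show ?thesis using assms unfolding joins_def contr_ends_def by auto
qed

lemma reach_contract:
  assumes "reach ends F u v" "F \<subseteq> E"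
  shows "reach (contr_ends V' ends) (F \<inter> contr_E E V' ends) (contr_map V' u) (contr_map V' v)"
  using assms
proof (induction rule: reach.induct)
  case (reach_refl u) show ?case by (rule reach.intros)
next
  case (reach_step u v g w)
  show ?case
  proof (cases "g \<in> contr_E E V' ends")
    case True
    then show ?thesis
      using reach_step joins_contract[OF reach_step.hyps(3)] by (blast intro: reach.reach_step)
  next
    case False
    \<comment> \<open>an edge inside V' is contracted away, joining the new vertex to itself\<close>
    then have "fst (ends g) \<in> V'" "snd (ends g) \<in> V'"
      using reach_step by (auto simp: contr_E_def)
    then have "contr_map V' v = contr_map V' w"
      using reach_step.hyps(3) by (auto simp: joins_def contr_map_def)
    then show ?thesis using reach_step by simp
  qed
qed

lemma reach_if_contr_map_eq:
  assumes "contr_map V' u = contr_map V' v" "\<forall>x\<in>V'. \<forall>y\<in>V'. reach ends F x y"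
  shows "reach ends F u v"
  using assms by (cases "u \<in> V'") (auto simp: contr_map_def reach.reach_refl split: if_splits)

lemma reach_lift_contract:
  assumes "reach (contr_ends V' ends) Fb (contr_map V' u) (contr_map V' v)"
    and conn: "\<forall>x\<in>V'. \<forall>y\<in>V'. reach ends F x y"
  shows "reach ends (F \<union> Fb) u v"
proof -
  have same: "reach ends (F \<union> Fb) u v" if "contr_map V' u = contr_map V' v" for u v
    by (rule reach_mono[OF reach_if_contr_map_eq[OF that conn]]) blast
  have "\<forall>u v. contr_map V' u = x \<longrightarrow> contr_map V' v = y \<longrightarrow> reach ends (F \<union> Fb) u v"
    if "reach (contr_ends V' ends) Fb x y" for x y
    using that
  proof (induction rule: reach.induct)
    case (reach_refl x)
    show ?case by (intro allI impI) (rule same, simp)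
  next
    case (reach_step x y g z)
    obtain p q where pq: "joins ends g p q" "contr_map V' p = y" "contr_map V' q = z"
      using joins_contract_lift[OF reach_step.hyps(3)] by blast
    have pq_reach: "reach ends (F \<union> Fb) p q"
      using reach_step.hyps(2) by (intro reach_edge[OF _ pq(1)]) blast
    show ?case
    proof (intro allI impI)
      fix u v assume uv: "contr_map V' u = x" "contr_map V' v = z"
      have "reach ends (F \<union> Fb) u p" using reach_step.IH uv(1) pq(2) by blast
      moreover have "reach ends (F \<union> Fb) q v" using same uv(2) pq(3) by simp
      ultimately show "reach ends (F \<union> Fb) u v" using pq_reach reach_trans by metis
    qed
  qed
  from this[OF assms(1)] show ?thesis by simp
qed

lemma spanning_tree_restrict_bispanning:
  assumes G': "mgraph V' E' ends" "V' \<noteq> {}" "bispanning V' E' ends"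
    and ST: "S \<inter> T = {}" "E' \<subseteq> S \<union> T" "\<not> has_cycle ends S" "\<not> has_cycle ends T"
  shows "spanning_tree V' E' ends (S \<inter> E')"
proof -
  have acyclic: "\<not> has_cycle ends (S \<inter> E')" "\<not> has_cycle ends (T \<inter> E')"
    using ST(3,4) has_cycle_mono by blast+
  have "card (S \<inter> E') + 1 \<le> card V'" "card (T \<inter> E') + 1 \<le> card V'"
    using card_acyclic_le[OF mgraph_subset[OF G'(1)] G'(2)] acyclic by blast+
  moreover have "card E' = card (S \<inter> E') + card (T \<inter> E')"
  proof -
    have "E' = (S \<inter> E') \<union> (T \<inter> E')" using ST(2) by blast
    moreover have "finite E'" using G'(1) by (simp add: mgraph_def)
    ultimately show ?thesis using card_Un_disjoint[of "S \<inter> E'" "T \<inter> E'"] ST(1) by auto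
  qed
  moreover have "card E' + 2 = 2 * card V'" by (rule card_bispanning[OF G'])
  ultimately have "card (S \<inter> E') + 1 = card V'" by simp
  then show ?thesis using spanning_tree_if_acyclic_card[OF G'(1,2) _ acyclic(1)] by blast
qed

lemma spanning_tree_contract:
  assumes G: "mgraph V E ends" and sub: "subgraph V' E' V E ends" and "V' \<noteq> {}"
    and S: "spanning_tree V E ends S" and S': "spanning_tree V' E' ends (S \<inter> E')"
  shows "spanning_tree (contr_V V V') (contr_E E V' ends) (contr_ends V' ends) (S \<inter> contr_E E V' ends)"
proof (rule spanning_tree_if_connected_card[OF mgraph_contract[OF G]])
  have V': "V' \<subseteq> V" "mgraph V' E' ends" using sub by (auto simp: subgraph_def)
  have "S \<subseteq> E" using S by (simp add: spanning_tree_def)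
  show "contr_V V V' \<noteq> {}" by (simp add: contr_V_def)
  show "S \<inter> contr_E E V' ends \<subseteq> contr_E E V' ends" by blast
  show "\<forall>x\<in>contr_V V V'. \<forall>y\<in>contr_V V V'. reach (contr_ends V' ends) (S \<inter> contr_E E V' ends) x y"
  proof (intro ballI)
    fix x y assume "x \<in> contr_V V V'" "y \<in> contr_V V V'"
    then obtain u v where "u \<in> V" "v \<in> V" "x = contr_map V' u" "y = contr_map V' v"
      using contr_V_eq_image[OF \<open>V' \<noteq> {}\<close> V'(1)] by blast
    moreover have "reach ends S u v" using S calculation(1,2) by (simp add: spanning_tree_def)
    ultimately show "reach (contr_ends V' ends) (S \<inter> contr_E E V' ends) x y"
      using reach_contract[OF _ \<open>S \<subseteq> E\<close>] by simp
  qed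
  have fin: "finite V" "finite S" using G \<open>S \<subseteq> E\<close> finite_subset by (auto simp: mgraph_def)
  \<comment> \<open>the contraction deletes at least the |V'| - 1 edges of S inside G'\<close>
  have "card (S \<inter> E') \<le> card (S - contr_E E V' ends)"
    using subgraph_disjoint_contr_E[OF sub] fin(2) by (intro card_mono) auto
  moreover have "card S + 1 = card V" by (rule card_spanning_tree[OF G _ S]) (use V' \<open>V' \<noteq> {}\<close> in blast)
  moreover have "card (S \<inter> E') + 1 = card V'" by (rule card_spanning_tree[OF V'(2) \<open>V' \<noteq> {}\<close> S'])
  moreover have "card V' \<le> card V" using fin(1) V'(1) by (rule card_mono)
  ultimately show "card (S \<inter> contr_E E V' ends) + 1 \<le> card (contr_V V V')"
    using card_contr_V[OF fin(1) V'(1)] card_Int_Diff[OF fin(2), of "contr_E E V' ends"] by simp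
qed

lemma spanning_tree_union_contract:
  assumes G: "mgraph V E ends" and sub: "subgraph V' E' V E ends" and "V' \<noteq> {}"
    and S': "spanning_tree V' E' ends S'"
    and Sb: "spanning_tree (contr_V V V') (contr_E E V' ends) (contr_ends V' ends) Sb"
  shows "spanning_tree V E ends (S' \<union> Sb)"
proof (rule spanning_tree_if_connected_card[OF G])
  have V': "V' \<subseteq> V" "E' \<subseteq> E" "mgraph V' E' ends" using sub by (auto simp: subgraph_def)
  have sub_edges: "S' \<subseteq> E'" "Sb \<subseteq> contr_E E V' ends" using S' Sb by (auto simp: spanning_tree_def)
  show "V \<noteq> {}" using V'(1) \<open>V' \<noteq> {}\<close> by blast
  show "S' \<union> Sb \<subseteq> E" using sub_edges V'(2) contr_E_subset[of E V' ends] by blast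
  show "\<forall>u\<in>V. \<forall>v\<in>V. reach ends (S' \<union> Sb) u v"
  proof (intro ballI)
    fix u v assume "u \<in> V" "v \<in> V"
    then have "reach (contr_ends V' ends) Sb (contr_map V' u) (contr_map V' v)"
      using Sb contr_V_eq_image[OF \<open>V' \<noteq> {}\<close> V'(1)] by (simp add: spanning_tree_def)
    moreover have "\<forall>x\<in>V'. \<forall>y\<in>V'. reach ends S' x y" using S' by (simp add: spanning_tree_def)
    ultimately show "reach ends (S' \<union> Sb) u v" by (rule reach_lift_contract)
  qed
  have fin: "finite V" "finite S'" "finite Sb"
    using G V'(3) finite_subset[OF sub_edges(1)] finite_subset[OF sub_edges(2)]
      finite_subset[OF contr_E_subset] by (auto simp: mgraph_def)
  have "S' \<inter> Sb = {}" using sub_edges subgraph_disjoint_contr_E[OF sub] by blast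
  then have "card (S' \<union> Sb) = card S' + card Sb" by (rule card_Un_disjoint[OF fin(2,3)])
  moreover have "card S' + 1 = card V'" by (rule card_spanning_tree[OF V'(3) \<open>V' \<noteq> {}\<close> S'])
  moreover have "card Sb + 1 = card (contr_V V V')"
    by (rule card_spanning_tree[OF mgraph_contract[OF G] _ Sb]) (simp add: contr_V_def)
  moreover have "card V' \<le> card V" using fin(1) V'(1) by (rule card_mono)
  ultimately show "card (S' \<union> Sb) + 1 \<le> card V"
    using card_contr_V[OF fin(1) V'(1)] by simp
qed

theorem mainTheorem18:
  fixes V V' :: "'v set" and E E' :: "'e set" and ends :: "'e \<Rightarrow> 'v \<times> 'v"
  assumes G: "mgraph V E ends" and bisp: "bispanning V E ends"
    and sub: "subgraph V' E' V E ends" and nonempty: "V' \<noteq> {}"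
    and bisp': "bispanning V' E' ends"
  shows
   "(\<forall>S T. S \<inter> T = {} \<and> S \<union> T = E \<and> spanning_tree V E ends S \<and> spanning_tree V E ends T \<longrightarrow>
       spanning_tree V' E' ends (S \<inter> E') \<and> spanning_tree V' E' ends (T \<inter> E') \<and>
       (S \<inter> E') \<inter> (T \<inter> E') = {} \<and>
       spanning_tree (contr_V V V') (contr_E E V' ends) (contr_ends V' ends) (S \<inter> contr_E E V' ends) \<and>
       spanning_tree (contr_V V V') (contr_E E V' ends) (contr_ends V' ends) (T \<inter> contr_E E V' ends) \<and>
       (S \<inter> contr_E E V' ends) \<inter> (T \<inter> contr_E E V' ends) = {})
    \<and>
    (\<forall>S' T' Sb Tb. S' \<inter> T' = {} \<and> spanning_tree V' E' ends S' \<and> spanning_tree V' E' ends T' \<and>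
       Sb \<inter> Tb = {} \<and>
       spanning_tree (contr_V V V') (contr_E E V' ends) (contr_ends V' ends) Sb \<and>
       spanning_tree (contr_V V V') (contr_E E V' ends) (contr_ends V' ends) Tb \<longrightarrow>
       S' \<inter> Sb = {} \<and> T' \<inter> Tb = {} \<and>
       spanning_tree V E ends (S' \<union> Sb) \<and> spanning_tree V E ends (T' \<union> Tb) \<and>
       (S' \<union> Sb) \<inter> (T' \<union> Tb) = {})"
proof -
  have G': "mgraph V' E' ends" "E' \<subseteq> E" using sub by (auto simp: subgraph_def)
  have restrict: "spanning_tree V' E' ends (S \<inter> E')"
    if "S \<inter> T = {}" "S \<union> T = E" "spanning_tree V E ends S" "spanning_tree V E ends T" for S T
    using spanning_tree_restrict_bispanning[OF G'(1) nonempty bisp' that(1)] that G'(2)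
    by (auto simp: spanning_tree_def)
  have contract:
    "spanning_tree (contr_V V V') (contr_E E V' ends) (contr_ends V' ends) (S \<inter> contr_E E V' ends)"
    if "S \<inter> T = {}" "S \<union> T = E" "spanning_tree V E ends S" "spanning_tree V E ends T" for S T
    using spanning_tree_contract[OF G sub nonempty that(3) restrict[OF that]] .
  have join: "spanning_tree V E ends (S' \<union> Sb)"
    if "spanning_tree V' E' ends S'"
      "spanning_tree (contr_V V V') (contr_E E V' ends) (contr_ends V' ends) Sb" for S' Sb
    using spanning_tree_union_contract[OF G sub nonempty that] .
  have edges: "spanning_tree W F g T \<Longrightarrow> T \<subseteq> F" for W F g T
    by (simp add: spanning_tree_def)
  have disjoint: "E' \<inter> contr_E E V' ends = {}" by (rule subgraph_disjoint_contr_E[OF sub])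
  show ?thesis
    apply (rule conjI; intro allI impI; elim conjE)
    subgoal for S T
      using restrict[of S T] restrict[of T S] contract[of S T] contract[of T S]
      by (simp add: Int_commute Un_commute) blast
    subgoal for S' T' Sb Tb
      using join[of S' Sb] join[of T' Tb] edges[of V' E' ends S'] edges[of V' E' ends T']
        edges[of _ _ _ Sb] edges[of _ _ _ Tb] disjoint
      by blast
    done
qed

end
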